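(* In the setting described in the context, for every $t\in\{0,1,\dots,T\}$ the value function $V^{(t)}_\theta(s)$, viewed as a function of $(\theta,s)$, is Lipschitz with constant $L_V^{(t)}\le 3T^2L_{R_\theta}\bar L_{f_\theta}^{T-t-1}$.
   Context: Transitions $s_{t+1}=f(s_t,a_t)+\zeta_t$ with $\zeta_t\sim p(\zeta)$ i.i.d.; deterministic policy $\pi_\theta$, $\theta\in\Theta\subseteq\mathbb{R}^{d_\Theta}$; $f_\theta(s)=f(s,\pi_\theta(s))$ and $R_\theta(s)=R(s,\pi_\theta(s))$, viewed as functions of $(\theta,s)$. Value functions: $V^{(T)}_\theta\equiv 0$ and $V^{(t)}_\theta(s)=R_\theta(s)+\mathbb{E}_{p(\zeta)}[V^{(t+1)}_\theta(f_\theta(s)+\zeta)]$ for $t=0,\dots,T-1$. $L_h$ denotes a Lipschitz constant (Euclidean norm) of $h$ jointly in $(\theta,s)$, and $\bar L_h=\max\{L_{\nabla h},L_h,1\}$. Standing assumption: $f_\theta,R_\theta$ are Lipschitz and twice continuously differentiable with Lipschitz first derivative. *)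

theory Defs
  imports "HOL-Analysis.Analysis" "HOL-Probability.Probability"
begin

definition C2_lip_deriv ::
  "('x::euclidean_space \<Rightarrow> 'y::euclidean_space) \<Rightarrow> 'x set \<Rightarrow> real \<Rightarrow> bool" where
  "C2_lip_deriv h S Ld \<longleftrightarrow>
     (\<exists>h' :: 'x \<Rightarrow> ('x \<Rightarrow>\<^sub>L 'y).
        (\<forall>x\<in>S. (h has_derivative blinfun_apply (h' x)) (at x within S)) \<and>
        Ld-lipschitz_on S h' \<and>
        (\<exists>h'' :: 'x \<Rightarrow> ('x \<Rightarrow>\<^sub>L ('x \<Rightarrow>\<^sub>L 'y)).
           (\<forall>x\<in>S. (h' has_derivative blinfun_apply (h'' x)) (at x within S)) \<and>
           continuous_on S h''))"

fun Vsteps ::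
  "('p \<Rightarrow> 's::euclidean_space \<Rightarrow> 's) \<Rightarrow> ('p \<Rightarrow> 's \<Rightarrow> real) \<Rightarrow> 's measure
    \<Rightarrow> nat \<Rightarrow> 'p \<Rightarrow> 's \<Rightarrow> real" where
  "Vsteps fth Rth P 0 th s = 0"
| "Vsteps fth Rth P (Suc k) th s =
     Rth th s + (\<integral>\<zeta>. Vsteps fth Rth P k th (fth th s + \<zeta>) \<partial>P)"

definition Vval ::
  "('p \<Rightarrow> 's::euclidean_space \<Rightarrow> 's) \<Rightarrow> ('p \<Rightarrow> 's \<Rightarrow> real) \<Rightarrow> 's measure
    \<Rightarrow> nat \<Rightarrow> nat \<Rightarrow> 'p \<Rightarrow> 's \<Rightarrow> real" where
  "Vval fth Rth P T t = Vsteps fth Rth P (T - t)"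

end

theory Submission
  imports Defs
begin

text \<open>
  Lipschitz continuity in the pair \<open>(\<theta>, s)\<close> is too coarse to iterate the Bellman recursion:
  feeding the joint constant back in multiplies it by \<open>1 + L\<^sub>f\<close> per step. We therefore track
  separate constants \<open>A\<^sub>k\<close> for \<open>\<theta>\<close> and \<open>B\<^sub>k\<close> for \<open>s\<close>. Since the noise enters additively, taking the
  expectation preserves both, and one Bellman step gives
  \<open>A\<^sub>k\<^sub>+\<^sub>1 = L\<^sub>R + A\<^sub>k + B\<^sub>k L\<^sub>f\<close> and \<open>B\<^sub>k\<^sub>+\<^sub>1 = L\<^sub>R + B\<^sub>k L\<^sub>f\<close> (the \<open>\<theta>\<close>-dependence of \<open>V\<^sub>k\<close> itself is not
  amplified by the dynamics). With \<open>M = max L\<^sub>f 1\<close> this yields \<open>B\<^sub>k \<le> L\<^sub>R M\<^sup>k\<^sup>-\<^sup>1 k\<close> and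
  \<open>A\<^sub>k \<le> L\<^sub>R M\<^sup>k\<^sup>-\<^sup>1 k\<^sup>2\<close>, so the joint constant is at most \<open>2 L\<^sub>R M\<^sup>k\<^sup>-\<^sup>1 k\<^sup>2\<close> with \<open>k = T - t \<le> T\<close>.
\<close>

definition lipschitz_pair_on ::
  "real \<Rightarrow> real \<Rightarrow> 'p::metric_space set \<Rightarrow> ('p \<Rightarrow> 's::metric_space \<Rightarrow> 'y::metric_space) \<Rightarrow> bool"
  where "lipschitz_pair_on A B \<Theta> g \<longleftrightarrow>
    (\<forall>\<theta>\<in>\<Theta>. \<forall>\<theta>'\<in>\<Theta>. \<forall>s s'. dist (g \<theta> s) (g \<theta>' s') \<le> A * dist \<theta> \<theta>' + B * dist s s')"

lemma lipschitz_pair_onD: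
  fixes g :: "'p::metric_space \<Rightarrow> 's::metric_space \<Rightarrow> 'y::metric_space"
  shows "lipschitz_pair_on A B \<Theta> g \<Longrightarrow> \<theta> \<in> \<Theta> \<Longrightarrow> \<theta>' \<in> \<Theta> \<Longrightarrow>
    dist (g \<theta> s) (g \<theta>' s') \<le> A * dist \<theta> \<theta>' + B * dist s s'"
  unfolding lipschitz_pair_on_def by blast

lemma lipschitz_pair_on_mono:
  fixes g :: "'p::metric_space \<Rightarrow> 's::metric_space \<Rightarrow> 'y::metric_space"
  assumes "lipschitz_pair_on A B \<Theta> g" and "A \<le> A'" and "B \<le> B'"
  shows "lipschitz_pair_on A' B' \<Theta> g"
  unfolding lipschitz_pair_on_def
proof (intro ballI allI)
  fix \<theta> \<theta>' s s' assume "\<theta> \<in> \<Theta>" "\<theta>' \<in> \<Theta>"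
  then have "dist (g \<theta> s) (g \<theta>' s') \<le> A * dist \<theta> \<theta>' + B * dist s s'"
    by (rule lipschitz_pair_onD[OF assms(1)])
  also have "\<dots> \<le> A' * dist \<theta> \<theta>' + B' * dist s s'"
    using assms(2,3) by (intro add_mono mult_right_mono) auto
  finally show "dist (g \<theta> s) (g \<theta>' s') \<le> A' * dist \<theta> \<theta>' + B' * dist s s'" .
qed

lemma dist_Pair_le_add: "dist (a, b) (c, d) \<le> dist a c + dist b d"
  by (simp add: dist_Pair_Pair sqrt_sum_squares_le_sum)

lemma lipschitz_on_imp_lipschitz_pair_on:
  fixes g :: "'p::metric_space \<Rightarrow> 's::metric_space \<Rightarrow> 'y::metric_space"
  assumes "L-lipschitz_on (\<Theta> \<times> UNIV) (\<lambda>(\<theta>, s). g \<theta> s)"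
  shows "lipschitz_pair_on L L \<Theta> g"
  unfolding lipschitz_pair_on_def
proof (intro ballI allI)
  fix \<theta> \<theta>' s s' assume "\<theta> \<in> \<Theta>" "\<theta>' \<in> \<Theta>"
  then have "dist (g \<theta> s) (g \<theta>' s') \<le> L * dist (\<theta>, s) (\<theta>', s')"
    using lipschitz_onD[OF assms] by fastforce
  also have "\<dots> \<le> L * (dist \<theta> \<theta>' + dist s s')"
    using lipschitz_on_nonneg[OF assms] by (intro mult_left_mono dist_Pair_le_add)
  finally show "dist (g \<theta> s) (g \<theta>' s') \<le> L * dist \<theta> \<theta>' + L * dist s s'"
    by (simp add: distrib_left)
qed

lemma lipschitz_pair_on_imp_lipschitz_on:
  fixes g :: "'p::metric_space \<Rightarrow> 's::metric_space \<Rightarrow> 'y::metric_space"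
  assumes "lipschitz_pair_on A B \<Theta> g" and "0 \<le> A" and "0 \<le> B"
  shows "(A + B)-lipschitz_on (\<Theta> \<times> UNIV) (\<lambda>(\<theta>, s). g \<theta> s)"
proof (rule lipschitz_onI)
  fix x y :: "'p \<times> 's" assume "x \<in> \<Theta> \<times> UNIV" "y \<in> \<Theta> \<times> UNIV"
  then have "dist (g (fst x) (snd x)) (g (fst y) (snd y))
      \<le> A * dist (fst x) (fst y) + B * dist (snd x) (snd y)"
    using assms(1) by (intro lipschitz_pair_onD) auto
  also have "\<dots> \<le> A * dist x y + B * dist x y"
    using assms(2,3) by (intro add_mono mult_left_mono dist_fst_le dist_snd_le)
  finally show "dist ((\<lambda>(\<theta>, s). g \<theta> s) x) ((\<lambda>(\<theta>, s). g \<theta> s) y) \<le> (A + B) * dist x y"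
    by (simp add: case_prod_beta distrib_right)
qed (use assms in simp)

text \<open>No integrability is assumed: if one side is not integrable, neither is the other, and both
  Bochner integrals are \<open>0\<close>.\<close>

lemma (in prob_space) abs_integral_diff_le:
  fixes g h :: "'a \<Rightarrow> real"
  assumes "g \<in> borel_measurable M" and "h \<in> borel_measurable M"
    and bound: "\<And>x. \<bar>g x - h x\<bar> \<le> c"
  shows "\<bar>(\<integral>x. g x \<partial>M) - (\<integral>x. h x \<partial>M)\<bar> \<le> c"
proof -
  have diff: "integrable M (\<lambda>x. g x - h x)"
    using assms by (intro integrable_const_bound[where B = c]) auto
  have h_eq: "h = (\<lambda>x. g x - (g x - h x))" and g_eq: "g = (\<lambda>x. h x + (g x - h x))"
    by auto
  show ?thesis
  proof (cases "integrable M g")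
    case True
    then have "integrable M h"
      by (subst h_eq) (intro Bochner_Integration.integrable_diff diff)
    with True have "(\<integral>x. g x \<partial>M) - (\<integral>x. h x \<partial>M) = (\<integral>x. g x - h x \<partial>M)"
      by simp
    also have "\<bar>\<dots>\<bar> \<le> (\<integral>x. \<bar>g x - h x\<bar> \<partial>M)"
      by (rule integral_abs_bound)
    also have "\<dots> \<le> c"
      using diff bound by (intro integral_le_const) auto
    finally show ?thesis .
  next
    case False
    then have "\<not> integrable M h"
      by (subst (asm) g_eq) (use diff Bochner_Integration.integrable_add in blast)
    with False show ?thesis
      using bound[of undefined] by (simp add: not_integrable_integral_eq)
  qed
qed

lemma lipschitz_pair_on_Bellman:
  fixes f :: "'p::metric_space \<Rightarrow> 's::euclidean_space \<Rightarrow> 's"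
    and R V :: "'p \<Rightarrow> 's \<Rightarrow> real"
  assumes p: "prob_space p" and p_borel: "sets p = sets borel"
    and f: "lipschitz_pair_on F\<^sub>\<theta> F\<^sub>s \<Theta> f" and R: "lipschitz_pair_on R\<^sub>\<theta> R\<^sub>s \<Theta> R"
    and V: "lipschitz_pair_on A B \<Theta> V" and "0 \<le> B"
  shows "lipschitz_pair_on (R\<^sub>\<theta> + A + B * F\<^sub>\<theta>) (R\<^sub>s + B * F\<^sub>s) \<Theta>
           (\<lambda>\<theta> s. R \<theta> s + (\<integral>\<zeta>. V \<theta> (f \<theta> s + \<zeta>) \<partial>p))"
  unfolding lipschitz_pair_on_def
proof (intro ballI allI)
  fix \<theta> \<theta>' s s' assume \<theta>: "\<theta> \<in> \<Theta>" "\<theta>' \<in> \<Theta>"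
  have measurable: "(\<lambda>\<zeta>. V \<theta>\<^sub>0 (y + \<zeta>)) \<in> borel_measurable p" if "\<theta>\<^sub>0 \<in> \<Theta>" for \<theta>\<^sub>0 y
  proof -
    have "B-lipschitz_on UNIV (\<lambda>\<zeta>. V \<theta>\<^sub>0 (y + \<zeta>))"
    proof (rule lipschitz_onI)
      fix \<zeta> \<zeta>' :: 's
      show "dist (V \<theta>\<^sub>0 (y + \<zeta>)) (V \<theta>\<^sub>0 (y + \<zeta>')) \<le> B * dist \<zeta> \<zeta>'"
        using lipschitz_pair_onD[OF V that that, of "y + \<zeta>" "y + \<zeta>'"] by (simp add: dist_norm)
    qed (rule \<open>0 \<le> B\<close>)
    then have "continuous_on UNIV (\<lambda>\<zeta>. V \<theta>\<^sub>0 (y + \<zeta>))"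
      by (rule lipschitz_on_continuous_on)
    then show ?thesis
      unfolding measurable_cong_sets[OF p_borel refl] by (rule borel_measurable_continuous_onI)
  qed
  have "\<bar>(\<integral>\<zeta>. V \<theta> (f \<theta> s + \<zeta>) \<partial>p) - (\<integral>\<zeta>. V \<theta>' (f \<theta>' s' + \<zeta>) \<partial>p)\<bar>
      \<le> A * dist \<theta> \<theta>' + B * dist (f \<theta> s) (f \<theta>' s')"
  proof (rule prob_space.abs_integral_diff_le[OF p measurable[OF \<theta>(1)] measurable[OF \<theta>(2)]])
    fix \<zeta>
    show "\<bar>V \<theta> (f \<theta> s + \<zeta>) - V \<theta>' (f \<theta>' s' + \<zeta>)\<bar> \<le> A * dist \<theta> \<theta>' + B * dist (f \<theta> s) (f \<theta>' s')"
      using lipschitz_pair_onD[OF V \<theta>, of "f \<theta> s + \<zeta>" "f \<theta>' s' + \<zeta>"] by (simp add: dist_real_def dist_norm)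
  qed
  also have "\<dots> \<le> A * dist \<theta> \<theta>' + B * (F\<^sub>\<theta> * dist \<theta> \<theta>' + F\<^sub>s * dist s s')"
    using lipschitz_pair_onD[OF f \<theta>] \<open>0 \<le> B\<close> by (intro add_left_mono mult_left_mono)
  finally have "\<bar>(\<integral>\<zeta>. V \<theta> (f \<theta> s + \<zeta>) \<partial>p) - (\<integral>\<zeta>. V \<theta>' (f \<theta>' s' + \<zeta>) \<partial>p)\<bar>
      \<le> (A + B * F\<^sub>\<theta>) * dist \<theta> \<theta>' + B * F\<^sub>s * dist s s'"
    by (simp add: algebra_simps)
  with lipschitz_pair_onD[OF R \<theta>, of s s']
  show "dist (R \<theta> s + (\<integral>\<zeta>. V \<theta> (f \<theta> s + \<zeta>) \<partial>p)) (R \<theta>' s' + (\<integral>\<zeta>. V \<theta>' (f \<theta>' s' + \<zeta>) \<partial>p))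
      \<le> (R\<^sub>\<theta> + A + B * F\<^sub>\<theta>) * dist \<theta> \<theta>' + (R\<^sub>s + B * F\<^sub>s) * dist s s'"
    by (simp add: dist_real_def algebra_simps)
qed

lemma Vsteps_Suc_eq: "Vsteps f R p (Suc k) = (\<lambda>\<theta> s. R \<theta> s + (\<integral>\<zeta>. Vsteps f R p k \<theta> (f \<theta> s + \<zeta>) \<partial>p))"
  by (simp add: fun_eq_iff)

lemma lipschitz_pair_on_Vsteps:
  fixes f :: "'p::metric_space \<Rightarrow> 's::euclidean_space \<Rightarrow> 's"
    and R :: "'p \<Rightarrow> 's \<Rightarrow> real"
  assumes p: "prob_space p" and p_borel: "sets p = sets borel"
    and f: "lipschitz_pair_on M M \<Theta> f" and R: "lipschitz_pair_on L L \<Theta> R"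
    and "0 \<le> L" and "1 \<le> M"
  shows "lipschitz_pair_on (L * M ^ k * real (Suc k) ^ 2) (L * M ^ k * Suc k) \<Theta> (Vsteps f R p (Suc k))"
proof (induction k)
  case 0
  have "lipschitz_pair_on 0 0 \<Theta> (Vsteps f R p 0)"
    by (simp add: lipschitz_pair_on_def)
  from lipschitz_pair_on_Bellman[OF p p_borel f R this]
  show ?case
    by (simp add: Vsteps_Suc_eq)
next
  case (Suc k)
  define a where "a = L * M ^ k"
  define n where "n = real (Suc k)"
  have "1 \<le> M ^ k"
    using \<open>1 \<le> M\<close> by simp
  then have "L \<le> a" and "0 \<le> a"
    using \<open>0 \<le> L\<close> mult_left_mono[of 1 "M ^ k" L] by (auto simp: a_def)
  then have "a \<le> a * M"
    using \<open>1 \<le> M\<close> mult_left_mono[of 1 M a] by simp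
  have "0 \<le> a * M * n"
    using \<open>0 \<le> a\<close> \<open>1 \<le> M\<close> by (simp add: n_def)
  have "a * n\<^sup>2 \<le> a * M * n\<^sup>2"
    using \<open>a \<le> a * M\<close> by (simp add: mult_right_mono)
  have expand: "L * M ^ Suc k = a * M" "L * M ^ k * Suc k = a * n"
    "L * M ^ k * real (Suc k) ^ 2 = a * n\<^sup>2" "real (Suc (Suc k)) = n + 1"
    by (simp_all add: a_def n_def)
  have "a * M * (n + 1)\<^sup>2 = a * M * n\<^sup>2 + 2 * (a * M * n) + a * M"
    by (simp add: power2_eq_square algebra_simps)
  then have A_le: "L + a * n\<^sup>2 + a * n * M \<le> a * M * (n + 1)\<^sup>2"
    and B_le: "L + a * n * M \<le> a * M * (n + 1)"
    using \<open>L \<le> a\<close> \<open>a \<le> a * M\<close> \<open>0 \<le> a * M * n\<close> \<open>a * n\<^sup>2 \<le> a * M * n\<^sup>2\<close>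
    by (simp_all add: algebra_simps)
  have "0 \<le> a * n"
    using \<open>0 \<le> a\<close> by (simp add: n_def)
  have "lipschitz_pair_on (L + a * n\<^sup>2 + a * n * M) (L + a * n * M) \<Theta> (Vsteps f R p (Suc (Suc k)))"
    unfolding Vsteps_Suc_eq[of f R p "Suc k"]
    by (rule lipschitz_pair_on_Bellman[OF p p_borel f R Suc.IH[unfolded expand] \<open>0 \<le> a * n\<close>])
  then show ?case
    unfolding expand using A_le B_le by (rule lipschitz_pair_on_mono)
qed

corollary lipschitz_on_Vsteps:
  fixes f :: "'p::metric_space \<Rightarrow> 's::euclidean_space \<Rightarrow> 's"
    and R :: "'p \<Rightarrow> 's \<Rightarrow> real"
  assumes "prob_space p" and "sets p = sets borel"
    and f: "L\<^sub>f-lipschitz_on (\<Theta> \<times> UNIV) (\<lambda>(\<theta>, s). f \<theta> s)"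
    and R: "L-lipschitz_on (\<Theta> \<times> UNIV) (\<lambda>(\<theta>, s). R \<theta> s)"
    and "L\<^sub>f \<le> M" and "1 \<le> M"
  shows "(2 * L * M ^ k * real (Suc k) ^ 2)-lipschitz_on (\<Theta> \<times> UNIV) (\<lambda>(\<theta>, s). Vsteps f R p (Suc k) \<theta> s)"
proof -
  have "0 \<le> L"
    using R by (rule lipschitz_on_nonneg)
  have "lipschitz_pair_on M M \<Theta> f"
    by (rule lipschitz_pair_on_mono[OF lipschitz_on_imp_lipschitz_pair_on[OF f] \<open>L\<^sub>f \<le> M\<close> \<open>L\<^sub>f \<le> M\<close>])
  from lipschitz_pair_on_Vsteps[OF assms(1,2) this lipschitz_on_imp_lipschitz_pair_on[OF R] \<open>0 \<le> L\<close> \<open>1 \<le> M\<close>]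
  have "(L * M ^ k * real (Suc k) ^ 2 + L * M ^ k * Suc k)-lipschitz_on (\<Theta> \<times> UNIV) (\<lambda>(\<theta>, s). Vsteps f R p (Suc k) \<theta> s)"
    by (rule lipschitz_pair_on_imp_lipschitz_on) (use \<open>0 \<le> L\<close> \<open>1 \<le> M\<close> in auto)
  moreover have "L * M ^ k * Suc k \<le> L * M ^ k * real (Suc k) ^ 2"
    using \<open>0 \<le> L\<close> \<open>1 \<le> M\<close> by (intro mult_left_mono) (auto simp: power2_eq_square)
  ultimately show ?thesis
    by (auto intro: lipschitz_on_mono)
qed

theorem lemma2:
  fixes f :: "'s::euclidean_space \<Rightarrow> 'a \<Rightarrow> 's"
    and R :: "'s \<Rightarrow> 'a \<Rightarrow> real"
    and \<pi> :: "'p::euclidean_space \<Rightarrow> 's \<Rightarrow> 'a"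
    and \<Theta> :: "'p set"
    and p :: "'s measure"
    and T :: nat
    and L_f L_R L_df :: real
  defines "f\<theta> \<equiv> (\<lambda>\<theta> s. f s (\<pi> \<theta> s))"
    and "R\<theta> \<equiv> (\<lambda>\<theta> s. R s (\<pi> \<theta> s))"
  assumes p_prob: "prob_space p"
    and p_borel: "sets p = sets borel"
    and f_lip: "L_f-lipschitz_on (\<Theta> \<times> UNIV) (\<lambda>(\<theta>, s). f\<theta> \<theta> s)"
    and R_lip: "L_R-lipschitz_on (\<Theta> \<times> UNIV) (\<lambda>(\<theta>, s). R\<theta> \<theta> s)"
    and f_C2: "C2_lip_deriv (\<lambda>(\<theta>, s). f\<theta> \<theta> s) (\<Theta> \<times> UNIV) L_df"
    and R_C2: "\<exists>L_dR. C2_lip_deriv (\<lambda>(\<theta>, s). R\<theta> \<theta> s) (\<Theta> \<times> UNIV) L_dR"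
  shows "\<forall>t \<le> T. \<exists>L_V.
           L_V-lipschitz_on (\<Theta> \<times> UNIV) (\<lambda>(\<theta>, s). Vval f\<theta> R\<theta> p T t \<theta> s) \<and>
           L_V \<le> 3 * real T ^ 2 * L_R * (max L_df (max L_f 1)) powi (int T - int t - 1)"
proof (intro allI impI)
  fix t assume "t \<le> T"
  define M where "M = max L_df (max L_f 1)"
  have "0 \<le> L_R" and "0 < M"
    using lipschitz_on_nonneg[OF R_lip] by (auto simp: M_def)
  show "\<exists>L_V. L_V-lipschitz_on (\<Theta> \<times> UNIV) (\<lambda>(\<theta>, s). Vval f\<theta> R\<theta> p T t \<theta> s) \<and>
      L_V \<le> 3 * real T ^ 2 * L_R * M powi (int T - int t - 1)"
  proof (cases "T - t")
    case 0
    then have "0-lipschitz_on (\<Theta> \<times> UNIV) (\<lambda>(\<theta>, s). Vval f\<theta> R\<theta> p T t \<theta> s)"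
      by (simp add: Vval_def lipschitz_on_def case_prod_beta)
    with \<open>0 \<le> L_R\<close> \<open>0 < M\<close> show ?thesis
      by (intro exI[of _ 0]) auto
  next
    case (Suc k)
    have "real (Suc k) ^ 2 \<le> real T ^ 2"
      using Suc \<open>t \<le> T\<close> by (intro power_mono) auto
    then have "2 * real (Suc k) ^ 2 \<le> 3 * real T ^ 2"
      using zero_le_power2[of "real T"] by linarith
    then have bound: "2 * real (Suc k) ^ 2 * (L_R * M ^ k) \<le> 3 * real T ^ 2 * (L_R * M ^ k)"
      using \<open>0 \<le> L_R\<close> \<open>0 < M\<close> by (intro mult_right_mono) auto
    have "(2 * L_R * M ^ k * real (Suc k) ^ 2)-lipschitz_on (\<Theta> \<times> UNIV) (\<lambda>(\<theta>, s). Vval f\<theta> R\<theta> p T t \<theta> s)"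
      unfolding Vval_def Suc using p_prob p_borel f_lip R_lip by (rule lipschitz_on_Vsteps) (auto simp: M_def)
    moreover have "int T - int t - 1 = int k"
      using Suc \<open>t \<le> T\<close> by linarith
    ultimately show ?thesis
      using bound by (auto simp: power_int_of_nat ac_simps)
  qed
qed

end
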